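(* Let $R$ be an integral domain, $J$ an ideal of $R$ and $f(X)\in R[X]$ a monic polynomial of degree at least $1$. Then the ideal $I = J R[X] + f(X)R[X]$ of $R[X]$ is power stable; moreover $I^t\cap R = J^t$ for all $t\geq 1$.
   Context: An ideal $I$ of the polynomial ring $R[X]$ over an integral domain $R$ is called power stable if $I^t\cap R = (I\cap R)^t$ for all integers $t\geq 1$. *)

theory Defs
  imports "HOL-Computational_Algebra.Polynomial"
begin

definition is_ideal :: "'a::comm_ring_1 set \<Rightarrow> bool" where
  "is_ideal I \<longleftrightarrow> 0 \<in> I \<and> (\<forall>a\<in>I. \<forall>b\<in>I. a + b \<in> I) \<and> (\<forall>r. \<forall>a\<in>I. r * a \<in> I)"

definition ideal_gen :: "'a::comm_ring_1 set \<Rightarrow> 'a set" where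
  "ideal_gen S = \<Inter>{I. is_ideal I \<and> S \<subseteq> I}"

definition ideal_sum :: "'a::comm_ring_1 set \<Rightarrow> 'a set \<Rightarrow> 'a set" where
  "ideal_sum A B = {a + b | a b. a \<in> A \<and> b \<in> B}"

definition ideal_mult :: "'a::comm_ring_1 set \<Rightarrow> 'a set \<Rightarrow> 'a set" where
  "ideal_mult A B = ideal_gen {a * b | a b. a \<in> A \<and> b \<in> B}"

primrec ideal_pow :: "'a::comm_ring_1 set \<Rightarrow> nat \<Rightarrow> 'a set" where
  "ideal_pow I 0 = UNIV"
| "ideal_pow I (Suc n) = ideal_mult I (ideal_pow I n)"

definition ext_ideal :: "'a::comm_ring_1 set \<Rightarrow> 'a poly set" where
  "ext_ideal J = ideal_gen ((\<lambda>c. [:c:]) ` J)"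

definition principal_ideal :: "'a::comm_ring_1 \<Rightarrow> 'a set" where
  "principal_ideal f = {f * g | g. True}"

text \<open>Contraction I \<inter> R of an ideal of R[X] (R identified with the constants).\<close>
definition contr :: "'a::comm_ring_1 poly set \<Rightarrow> 'a set" where
  "contr I = {c. [:c:] \<in> I}"

definition power_stable :: "'a::comm_ring_1 poly set \<Rightarrow> bool" where
  "power_stable I \<longleftrightarrow> (\<forall>t::nat. t \<ge> 1 \<longrightarrow> contr (ideal_pow I t) = ideal_pow (contr I) t)"

end

theory Submission
  imports Defs
begin

text \<open>
  Write \<open>I = J R[X] + f R[X]\<close> and let \<open>K R[X]\<close> be the ideal of polynomials with all
  coefficients in \<open>K\<close>. Since \<open>(A R[X] + f R[X]) (B R[X] + f R[X]) \<subseteq> AB R[X] + f R[X]\<close>,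
  every power satisfies \<open>I\<^sup>t \<subseteq> J\<^sup>t R[X] + f R[X]\<close>. If a constant \<open>c\<close> equals \<open>g + f h\<close>
  with \<open>g \<in> J\<^sup>t R[X]\<close>, then all coefficients of \<open>f h\<close> in degrees \<open>\<ge> deg f \<ge> 1\<close> lie in
  \<open>J\<^sup>t\<close>; as \<open>f\<close> is monic, this forces every coefficient of \<open>h\<close> into \<open>J\<^sup>t\<close>, so \<open>c \<in> J\<^sup>t\<close>.
  The reverse inclusion \<open>J\<^sup>t \<subseteq> I\<^sup>t \<inter> R\<close> holds for any ideal. Nothing here needs \<open>R\<close> to be
  a domain, so the lemmas are stated for commutative rings.
\<close>

lemma is_ideal_ideal_gen: "is_ideal (ideal_gen S)"
  unfolding ideal_gen_def is_ideal_def by blast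

lemma ideal_gen_least: "is_ideal I \<Longrightarrow> S \<subseteq> I \<Longrightarrow> ideal_gen S \<subseteq> I"
  unfolding ideal_gen_def by blast

lemma ideal_gen_superset: "S \<subseteq> ideal_gen S"
  unfolding ideal_gen_def by blast

lemma is_ideal_ideal_pow: "is_ideal (ideal_pow I t)"
  by (cases t) (simp_all add: ideal_mult_def is_ideal_ideal_gen, simp add: is_ideal_def)

lemma ideal_sum_mem:
  assumes "is_ideal I" "\<And>x. x \<in> A \<Longrightarrow> g x \<in> I"
  shows "sum g A \<in> I"
  using assms(2)
  by (induction A rule: infinite_finite_induct) (use assms(1) in \<open>auto simp: is_ideal_def\<close>)

lemma is_ideal_minus: "is_ideal I \<Longrightarrow> a \<in> I \<Longrightarrow> - a \<in> I"
  unfolding is_ideal_def by (metis mult_minus1)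

lemma is_ideal_diff: "is_ideal I \<Longrightarrow> a \<in> I \<Longrightarrow> b \<in> I \<Longrightarrow> a - b \<in> I"
  using is_ideal_minus[of I b] unfolding is_ideal_def by (metis diff_conv_add_uminus)

lemma is_ideal_mult_right: "is_ideal I \<Longrightarrow> a \<in> I \<Longrightarrow> a * r \<in> I"
  unfolding is_ideal_def by (metis mult.commute)

lemma is_ideal_ideal_sum:
  assumes A: "is_ideal A" and B: "is_ideal B"
  shows "is_ideal (ideal_sum A B)"
  unfolding is_ideal_def
proof (intro conjI ballI allI)
  show "0 \<in> ideal_sum A B"
    using A B unfolding ideal_sum_def is_ideal_def by force
  fix x y r
  assume "x \<in> ideal_sum A B"
  then obtain a b where x: "x = a + b" "a \<in> A" "b \<in> B"
    unfolding ideal_sum_def by blast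
  have "r * x = r * a + r * b"
    by (simp add: x algebra_simps)
  then show "r * x \<in> ideal_sum A B"
    using x A B unfolding ideal_sum_def is_ideal_def by blast
  assume "y \<in> ideal_sum A B"
  then obtain a' b' where y: "y = a' + b'" "a' \<in> A" "b' \<in> B"
    unfolding ideal_sum_def by blast
  have "x + y = (a + a') + (b + b')"
    by (simp add: x y algebra_simps)
  then show "x + y \<in> ideal_sum A B"
    using x y A B unfolding ideal_sum_def is_ideal_def by blast
qed

lemma is_ideal_principal_ideal: "is_ideal (principal_ideal f)"
  unfolding is_ideal_def principal_ideal_def
  by (auto simp: algebra_simps) (metis mult_zero_left, metis distrib_right, metis mult.assoc)

lemma is_ideal_ideal_mult: "is_ideal (ideal_mult A B)"
  unfolding ideal_mult_def by (rule is_ideal_ideal_gen)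

lemma ideal_mult_least:
  assumes "is_ideal C" "\<And>a b. a \<in> A \<Longrightarrow> b \<in> B \<Longrightarrow> a * b \<in> C"
  shows "ideal_mult A B \<subseteq> C"
  unfolding ideal_mult_def using assms by (intro ideal_gen_least) auto

lemma ideal_mult_mem: "a \<in> A \<Longrightarrow> b \<in> B \<Longrightarrow> a * b \<in> ideal_mult A B"
  unfolding ideal_mult_def by (rule ideal_gen_superset[THEN subsetD]) blast

lemma ideal_pow_1:
  assumes "is_ideal J"
  shows "ideal_pow J 1 = J"
proof
  show "ideal_pow J 1 \<subseteq> J"
    using ideal_mult_least[OF assms, of J UNIV] is_ideal_mult_right[OF assms] by auto
  show "J \<subseteq> ideal_pow J 1"
    using ideal_mult_mem[of _ J 1 UNIV] by auto
qed

lemma ideal_pow_mono: "A \<subseteq> B \<Longrightarrow> ideal_pow A t \<subseteq> ideal_pow B t"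
proof (induction t)
  case (Suc t)
  then show ?case
    by (simp, intro ideal_mult_least is_ideal_ideal_mult) (auto intro: ideal_mult_mem)
qed simp

lemma is_ideal_contr:
  assumes Q: "is_ideal Q"
  shows "is_ideal (contr Q)"
  unfolding is_ideal_def
proof (intro conjI ballI allI)
  show "0 \<in> contr Q"
    using Q by (simp add: is_ideal_def contr_def)
  fix a b r
  assume a: "a \<in> contr Q"
  have "[:a:] + [:b:] \<in> Q" if "b \<in> contr Q"
    using Q a that unfolding is_ideal_def contr_def by blast
  then show "b \<in> contr Q \<Longrightarrow> a + b \<in> contr Q"
    by (simp add: contr_def)
  have "[:r:] * [:a:] \<in> Q"
    using Q a unfolding is_ideal_def contr_def by blast
  then show "r * a \<in> contr Q"
    by (simp add: contr_def mult.commute)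
qed

lemma ideal_pow_contr_subset: "ideal_pow (contr Q) t \<subseteq> contr (ideal_pow Q t)"
proof (induction t)
  case (Suc t)
  have "[:a * b:] \<in> ideal_pow Q (Suc t)" if "a \<in> contr Q" "b \<in> ideal_pow (contr Q) t" for a b
    using that Suc.IH ideal_mult_mem[of "[:a:]" Q "[:b:]" "ideal_pow Q t"]
    by (auto simp: contr_def mult.commute)
  then show ?case
    by (simp only: ideal_pow.simps, intro ideal_mult_least is_ideal_contr is_ideal_ideal_mult)
      (simp add: contr_def)
qed (simp add: contr_def)

definition coeffs_in :: "'a::comm_ring_1 set \<Rightarrow> 'a poly set" where
  "coeffs_in K = {p. \<forall>i. coeff p i \<in> K}"

lemma is_ideal_coeffs_in:
  assumes "is_ideal K"
  shows "is_ideal (coeffs_in K)"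
proof -
  have "coeff (r * p) i \<in> K" if "p \<in> coeffs_in K" for r p i
    unfolding coeff_mult using that assms
    by (intro ideal_sum_mem[OF assms]) (auto simp: coeffs_in_def is_ideal_def)
  then show ?thesis
    using assms unfolding is_ideal_def coeffs_in_def by auto
qed

lemma coeffs_in_mult:
  "p \<in> coeffs_in A \<Longrightarrow> q \<in> coeffs_in B \<Longrightarrow> p * q \<in> coeffs_in (ideal_mult A B)"
  unfolding coeffs_in_def
  by (auto simp: coeff_mult intro!: ideal_sum_mem is_ideal_ideal_mult ideal_mult_mem)

lemma const_in_coeffs_in: "0 \<in> K \<Longrightarrow> [:c:] \<in> coeffs_in K \<longleftrightarrow> c \<in> K"
  unfolding coeffs_in_def by (auto simp: coeff_pCons split: nat.split)

lemma ext_ideal_subset_coeffs_in: "is_ideal J \<Longrightarrow> ext_ideal J \<subseteq> coeffs_in J"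
  unfolding ext_ideal_def
  by (intro ideal_gen_least is_ideal_coeffs_in) (auto simp: const_in_coeffs_in is_ideal_def)

lemma mult_mem_ideal_sum_principal:
  assumes "a \<in> ideal_sum A (principal_ideal f)" "b \<in> ideal_sum B (principal_ideal f)"
    and "\<And>x y. x \<in> A \<Longrightarrow> y \<in> B \<Longrightarrow> x * y \<in> C"
  shows "a * b \<in> ideal_sum C (principal_ideal f)"
proof -
  obtain x g where "a = x + f * g" "x \<in> A"
    using assms(1) unfolding ideal_sum_def principal_ideal_def by auto
  moreover obtain y h where "b = y + f * h" "y \<in> B"
    using assms(2) unfolding ideal_sum_def principal_ideal_def by auto
  ultimately have "a * b = x * y + f * (x * h + g * y + f * g * h)" "x * y \<in> C"
    using assms(3) by (simp_all add: algebra_simps)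
  then show ?thesis
    unfolding ideal_sum_def principal_ideal_def by blast
qed

lemma ideal_pow_subset_coeffs_in:
  assumes "is_ideal J"
  shows "ideal_pow (ideal_sum (ext_ideal J) (principal_ideal f)) t
           \<subseteq> ideal_sum (coeffs_in (ideal_pow J t)) (principal_ideal f)"
proof (induction t)
  case 0
  have "p = p + f * 0" "p \<in> coeffs_in UNIV" for p :: "'a poly"
    by (simp_all add: coeffs_in_def)
  then show ?case
    unfolding ideal_sum_def principal_ideal_def ideal_pow.simps by blast
next
  case (Suc t)
  let ?I = "ideal_sum (ext_ideal J) (principal_ideal f)"
  have "ideal_mult ?I (ideal_pow ?I t)
          \<subseteq> ideal_sum (coeffs_in (ideal_mult J (ideal_pow J t))) (principal_ideal f)"
  proof (rule ideal_mult_least)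
    show "is_ideal (ideal_sum (coeffs_in (ideal_mult J (ideal_pow J t))) (principal_ideal f))"
      by (intro is_ideal_ideal_sum is_ideal_coeffs_in is_ideal_ideal_mult is_ideal_principal_ideal)
    fix a b
    assume "a \<in> ?I" "b \<in> ideal_pow ?I t"
    then show "a * b \<in> ideal_sum (coeffs_in (ideal_mult J (ideal_pow J t))) (principal_ideal f)"
      using Suc.IH ext_ideal_subset_coeffs_in[OF assms]
      by (intro mult_mem_ideal_sum_principal[of a _ f b]) (auto intro: coeffs_in_mult)
  qed
  then show ?case
    by simp
qed

text \<open>
  Induction on \<open>h = pCons a h\<^sub>0\<close>: the coefficients of \<open>f h\<close> above \<open>deg f\<close> are those of
  \<open>f h\<^sub>0\<close> shifted by one, and the coefficient in degree \<open>deg f\<close> is \<open>a\<close> plus one of \<open>f h\<^sub>0\<close>.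
\<close>
lemma monic_mult_coeffs_in:
  fixes f h :: "'a::comm_ring_1 poly"
  assumes K: "is_ideal K" and monic: "lead_coeff f = 1"
    and "\<And>n. n \<ge> degree f \<Longrightarrow> coeff (f * h) n \<in> K"
  shows "h \<in> coeffs_in K"
  using assms(3)
proof (induction h rule: pCons_induct)
  case 0
  then show ?case
    using K by (simp add: coeffs_in_def is_ideal_def)
next
  case (pCons a h)
  have prod: "f * pCons a h = smult a f + pCons 0 (f * h)"
    by (rule mult_pCons_right)
  have "coeff (f * h) n \<in> K" if "n \<ge> degree f" for n
    using pCons.prems[of "Suc n"] that by (simp add: prod coeff_eq_0)
  then have "h \<in> coeffs_in K"
    by (rule pCons.IH)
  then have fh: "f * h \<in> coeffs_in K"
    using is_ideal_coeffs_in[OF K] by (auto simp: is_ideal_def)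
  have "coeff (pCons 0 (f * h)) (degree f) \<in> K"
    using fh K by (cases "degree f") (auto simp: coeffs_in_def is_ideal_def)
  moreover have "a + coeff (pCons 0 (f * h)) (degree f) \<in> K"
    using pCons.prems[of "degree f"] monic by (simp add: prod)
  ultimately have "a \<in> K"
    using is_ideal_diff[OF K] by fastforce
  with \<open>h \<in> coeffs_in K\<close> show ?case
    by (auto simp: coeffs_in_def coeff_pCons split: nat.split)
qed

lemma const_mem_ideal_sum_monic:
  fixes f :: "'a::comm_ring_1 poly"
  assumes K: "is_ideal K" and monic: "lead_coeff f = 1" and deg: "degree f \<ge> 1"
    and "[:c:] \<in> ideal_sum (coeffs_in K) (principal_ideal f)"
  shows "c \<in> K"
proof -
  obtain g h where c: "[:c:] = g + f * h" and g: "g \<in> coeffs_in K"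
    using assms(4) unfolding ideal_sum_def principal_ideal_def by auto
  have "coeff (f * h) n \<in> K" if "n \<ge> degree f" for n
  proof -
    have "coeff g n + coeff (f * h) n = 0"
      using arg_cong[OF c, of "\<lambda>p. coeff p n"] that deg by (cases n) auto
    then have "coeff (f * h) n = - coeff g n"
      by (metis neg_eq_iff_add_eq_0)
    then show ?thesis
      using g is_ideal_minus[OF K] by (simp add: coeffs_in_def)
  qed
  then have "h \<in> coeffs_in K"
    by (rule monic_mult_coeffs_in[OF K monic])
  then have "[:c:] \<in> coeffs_in K"
    unfolding c using g is_ideal_coeffs_in[OF K] by (auto simp: is_ideal_def)
  then show ?thesis
    using K by (simp add: const_in_coeffs_in is_ideal_def)
qed

lemma contr_ideal_pow_monic:
  fixes J :: "'a::comm_ring_1 set" and f :: "'a poly"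
  assumes J: "is_ideal J" and monic: "lead_coeff f = 1" and deg: "degree f \<ge> 1"
  shows "contr (ideal_pow (ideal_sum (ext_ideal J) (principal_ideal f)) t) = ideal_pow J t"
    (is "contr (ideal_pow ?I t) = _")
proof
  show "contr (ideal_pow ?I t) \<subseteq> ideal_pow J t"
    using ideal_pow_subset_coeffs_in[OF J, of f t]
    by (auto simp: contr_def intro: const_mem_ideal_sum_monic[OF is_ideal_ideal_pow monic deg])
  have "J \<subseteq> contr ?I"
  proof
    fix c assume "c \<in> J"
    then have "[:c:] \<in> ext_ideal J"
      unfolding ext_ideal_def by (auto intro: ideal_gen_superset[THEN subsetD])
    moreover have "[:c:] = [:c:] + f * 0"
      by simp
    ultimately show "c \<in> contr ?I"
      unfolding contr_def ideal_sum_def principal_ideal_def by blast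
  qed
  then show "ideal_pow J t \<subseteq> contr (ideal_pow ?I t)"
    using ideal_pow_mono ideal_pow_contr_subset by blast
qed

theorem theorem3p5:
  fixes J :: "'a::idom set" and f :: "'a poly"
  assumes "is_ideal J"
    and "lead_coeff f = 1"
    and "degree f \<ge> 1"
  shows "power_stable (ideal_sum (ext_ideal J) (principal_ideal f))
    \<and> (\<forall>t::nat. t \<ge> 1 \<longrightarrow>
          contr (ideal_pow (ideal_sum (ext_ideal J) (principal_ideal f)) t) = ideal_pow J t)"
proof -
  let ?I = "ideal_sum (ext_ideal J) (principal_ideal f)"
  have pow: "contr (ideal_pow ?I t) = ideal_pow J t" for t
    by (rule contr_ideal_pow_monic[OF assms])
  have "is_ideal ?I"
    unfolding ext_ideal_def by (intro is_ideal_ideal_sum is_ideal_ideal_gen is_ideal_principal_ideal)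
  then have "contr ?I = J"
    using pow[of 1] by (simp only: ideal_pow_1 \<open>is_ideal ?I\<close> assms(1))
  then show ?thesis
    unfolding power_stable_def using pow by simp
qed

end
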